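(* Let $\Omega$ be a metrizable separable space and $c$ a capacity on $\mathcal{L}$, extended to all real functions on $\Omega$. (i) For every open $V\subset\Omega$ there is an increasing sequence of non-negative continuous functions $h_n$ with $1_V=\lim_n h_n$ and $c(1_V)=\lim_n c(h_n)$. (ii) For every closed $F\subset\Omega$ there is a decreasing sequence of continuous functions $g_n\le1$ with $1_F=\lim_n g_n$ and $c(1_F)=\lim_n c(g_n)$.
   Context: $\mathcal{L}\subset\mathcal{C}_b(\Omega)$ is a linear subspace which is a vector lattice, contains the constants and generates the topology of $\Omega$. A capacity on $\mathcal{L}$ is a seminorm $c$ with $c(f)\le c(g)$ whenever $|f|\le|g|$, and $\inf_n c(f_n)=0$ for every sequence $f_n\in\mathcal{L}$ decreasing pointwise to $0$. It is extended to all real functions by $c(f)=\sup\{c(\varphi):\varphi\in\mathcal{L},0\le\varphi\le f\}$ for $f\ge0$ lower semicontinuous and $c(g)=\inf\{c(f):f\text{ l.s.c.},f\ge|g|\}$ for arbitrary $g$. *)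

theory Defs
  imports "HOL-Analysis.Analysis"
begin

definition admissible_space :: "('a::topological_space \<Rightarrow> real) set \<Rightarrow> bool" where
  "admissible_space L \<longleftrightarrow>
     (\<forall>f\<in>L. continuous_on UNIV f \<and> bounded (range f)) \<and>
     (\<forall>f\<in>L. \<forall>g\<in>L. (\<lambda>x. f x + g x) \<in> L) \<and>
     (\<forall>f\<in>L. \<forall>a::real. (\<lambda>x. a * f x) \<in> L) \<and>
     (\<forall>f\<in>L. \<forall>g\<in>L. (\<lambda>x. max (f x) (g x)) \<in> L \<and> (\<lambda>x. min (f x) (g x)) \<in> L) \<and>
     (\<forall>a::real. (\<lambda>_. a) \<in> L) \<and>
     (\<forall>S. open S \<longleftrightarrow>
        openin (topology_generated_by {f -` U | f U. f \<in> L \<and> open U}) S)"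

definition capacity :: "('a \<Rightarrow> real) set \<Rightarrow> (('a \<Rightarrow> real) \<Rightarrow> real) \<Rightarrow> bool" where
  "capacity L c \<longleftrightarrow>
     (\<forall>f\<in>L. \<forall>g\<in>L. c (\<lambda>x. f x + g x) \<le> c f + c g) \<and>
     (\<forall>f\<in>L. \<forall>a::real. c (\<lambda>x. a * f x) = \<bar>a\<bar> * c f) \<and>
     (\<forall>f\<in>L. \<forall>g\<in>L. (\<forall>x. \<bar>f x\<bar> \<le> \<bar>g x\<bar>) \<longrightarrow> c f \<le> c g) \<and>
     (\<forall>F::nat \<Rightarrow> 'a \<Rightarrow> real. (\<forall>n. F n \<in> L) \<and> (\<forall>n x. F (Suc n) x \<le> F n x) \<and>
          (\<forall>x. (\<lambda>n. F n x) \<longlonglongrightarrow> 0) \<longrightarrow> (INF n. c (F n)) = 0)"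

definition lsc :: "('a::topological_space \<Rightarrow> real) \<Rightarrow> bool" where
  "lsc f \<longleftrightarrow> (\<forall>a. open {x. a < f x})"

definition cap_lsc :: "('a \<Rightarrow> real) set \<Rightarrow> (('a \<Rightarrow> real) \<Rightarrow> real) \<Rightarrow> ('a \<Rightarrow> real) \<Rightarrow> ereal" where
  "cap_lsc L c f = (SUP \<phi> \<in> {\<phi>\<in>L. \<forall>x. 0 \<le> \<phi> x \<and> \<phi> x \<le> f x}. ereal (c \<phi>))"

definition cap_ext :: "('a::topological_space \<Rightarrow> real) set \<Rightarrow> (('a \<Rightarrow> real) \<Rightarrow> real) \<Rightarrow> ('a \<Rightarrow> real) \<Rightarrow> ereal" where
  "cap_ext L c g = (INF f \<in> {f. lsc f \<and> (\<forall>x. 0 \<le> f x) \<and> (\<forall>x. \<bar>g x\<bar> \<le> f x)}. cap_lsc L c f)"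

end

theory Submission
  imports Defs
begin

text \<open>Since \<open>L\<close> generates the topology and a separable metrizable space is second countable,
  every open \<open>V\<close> is covered by countably many sets \<open>{\<psi>\<^sub>k > 0}\<close> with \<open>0 \<le> \<psi>\<^sub>k \<in> L\<close>
  vanishing outside \<open>V\<close>; the functions \<open>min 1 (n \<cdot> max\<^sub>k\<^sub>\<le>\<^sub>n \<psi>\<^sub>k)\<close> lie in \<open>L\<close> and increase
  to \<open>1\<^sub>V\<close>. Limits of capacities are controlled by a Dini argument: if \<open>g\<^sub>n\<close> decreases to \<open>G\<close>
  and \<open>k\<^sub>n\<close> increases to \<open>K \<ge> G\<close> in \<open>L\<close>, then \<open>(g\<^sub>n - k\<^sub>n)\<^sup>+\<close> decreases to \<open>0\<close>, so eventually
  \<open>c(g\<^sub>n) \<le> c(k\<^sub>n) + \<epsilon>\<close>. For open \<open>V\<close> this gives \<open>c(1\<^sub>V) = sup c(h\<^sub>n)\<close>. For closed \<open>F\<close> one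
  takes \<open>g\<^sub>n = 1 - h\<^sub>n\<close> with \<open>h\<^sub>n\<close> approximating the complement; an l.s.c. \<open>f \<ge> 1\<^sub>F\<close> exceeds
  any \<open>t < 1\<close> on an open \<open>W \<supseteq> F\<close>, and comparing \<open>g\<^sub>n\<close> with the approximations of \<open>1\<^sub>W\<close>
  yields \<open>t \<cdot> inf c(g\<^sub>n) \<le> c(f)\<close>.\<close>

lemma (in Metric_space) separable_imp_second_countable:
  assumes "separable_space mtopology"
  shows "second_countable mtopology"
proof -
  obtain C where C: "countable C" "C \<subseteq> M" "mtopology closure_of C = M"
    using assms unfolding separable_space_def by auto
  define \<B> where "\<B> = (\<lambda>(c, n::nat). mball c (inverse (real (Suc n)))) ` (C \<times> UNIV)"
  have "\<exists>B\<in>\<B>. x \<in> B \<and> B \<subseteq> U" if U: "openin mtopology U" "x \<in> U" for U x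
  proof -
    obtain r where r: "r > 0" "mball x r \<subseteq> U"
      using U openin_mtopology by blast
    have x: "x \<in> M"
      using U openin_mtopology by blast
    obtain n where n: "inverse (real (Suc n)) < r / 2"
      using r(1) reals_Archimedean[of "r / 2"] by auto
    have "x \<in> mtopology closure_of C"
      using C(3) x by simp
    then have "\<exists>y\<in>C. y \<in> mball x (inverse (real (Suc n)))"
      unfolding metric_closure_of by simp
    then obtain c where c: "c \<in> C" "c \<in> mball x (inverse (real (Suc n)))" ..
    have "mball c (inverse (real (Suc n))) \<subseteq> mball x r"
    proof
      fix y assume "y \<in> mball c (inverse (real (Suc n)))"
      then have y: "y \<in> M" "d c y < inverse (real (Suc n))"
        by auto
      moreover have "d x c < inverse (real (Suc n))"
        using c by auto
      moreover have "d x y \<le> d x c + d c y"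
        using triangle x y(1) C(2) c(1) by blast
      ultimately show "y \<in> mball x r"
        using n x by auto
    qed
    moreover have "x \<in> mball c (inverse (real (Suc n)))" "mball c (inverse (real (Suc n))) \<in> \<B>"
      using c commute unfolding \<B>_def by auto
    ultimately show ?thesis
      using r(2) by blast
  qed
  moreover have "countable \<B>" "\<forall>B\<in>\<B>. openin mtopology B"
    unfolding \<B>_def using C(1) by auto
  ultimately show ?thesis
    unfolding second_countable_def by blast
qed

lemma separable_metrizable_imp_second_countable:
  "metrizable_space X \<Longrightarrow> separable_space X \<Longrightarrow> second_countable X"
  using Metric_space.separable_imp_second_countable unfolding metrizable_space_def by metis

lemma lsc_continuous: "continuous_on UNIV f \<Longrightarrow> lsc f"
  unfolding lsc_def using open_Collect_less[OF continuous_on_const] by blast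

lemma lsc_indicator_open:
  assumes "open V"
  shows "lsc (indicator V :: 'a::topological_space \<Rightarrow> real)"
  unfolding lsc_def
proof
  fix a :: real
  have "{x. a < (indicator V x :: real)} = (if a < 0 then UNIV else if a < 1 then V else {})"
    by (auto simp: indicator_def)
  then show "open {x. a < (indicator V x :: real)}"
    using assms by simp
qed

lemma cap_lsc_upper:
  "\<phi> \<in> L \<Longrightarrow> (\<And>x. 0 \<le> \<phi> x \<and> \<phi> x \<le> f x) \<Longrightarrow> ereal (c \<phi>) \<le> cap_lsc L c f"
  unfolding cap_lsc_def by (rule SUP_upper) auto

lemma cap_lsc_mono: "(\<And>x. f x \<le> g x) \<Longrightarrow> cap_lsc L c f \<le> cap_lsc L c g"
  unfolding cap_lsc_def by (rule SUP_subset_mono) (auto intro: order_trans)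

lemma cap_ext_eq_cap_lsc:
  assumes "lsc f" "\<And>x. 0 \<le> f x"
  shows "cap_ext L c f = cap_lsc L c f"
proof (rule antisym)
  show "cap_ext L c f \<le> cap_lsc L c f"
    unfolding cap_ext_def by (rule INF_lower) (use assms in auto)
  show "cap_lsc L c f \<le> cap_ext L c f"
    unfolding cap_ext_def
    by (rule INF_greatest) (auto intro!: cap_lsc_mono intro: order_trans[OF abs_ge_self])
qed

lemma cap_ext_mono:
  assumes "\<And>x. \<bar>f x\<bar> \<le> \<bar>g x\<bar>"
  shows "cap_ext L c f \<le> cap_ext L c g"
  unfolding cap_ext_def
  by (rule INF_superset_mono) (auto intro: order_trans[OF assms])

fun partial_max :: "(nat \<Rightarrow> 'a \<Rightarrow> real) \<Rightarrow> nat \<Rightarrow> 'a \<Rightarrow> real" where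
  "partial_max \<psi> 0 = \<psi> 0"
| "partial_max \<psi> (Suc m) = (\<lambda>y. max (partial_max \<psi> m y) (\<psi> (Suc m) y))"

lemma partial_max_upper: "k \<le> m \<Longrightarrow> \<psi> k y \<le> partial_max \<psi> m y"
  by (induction m) (auto simp: le_Suc_eq)

lemma partial_max_least: "(\<And>k. \<psi> k y \<le> b) \<Longrightarrow> partial_max \<psi> m y \<le> b"
  by (induction m) auto

lemma partial_max_mono: "partial_max \<psi> m y \<le> partial_max \<psi> (Suc m) y"
  by simp

locale admissible_lattice =
  fixes L :: "('a::topological_space \<Rightarrow> real) set"
  assumes admissible: "admissible_space L"
begin

lemma const_in: "(\<lambda>_. a) \<in> L"
  using admissible unfolding admissible_space_def by blast

lemma add_in: "f \<in> L \<Longrightarrow> g \<in> L \<Longrightarrow> (\<lambda>x. f x + g x) \<in> L"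
  using admissible unfolding admissible_space_def by blast

lemma scale_in: "f \<in> L \<Longrightarrow> (\<lambda>x. a * f x) \<in> L"
  using admissible unfolding admissible_space_def by blast

lemma max_in: "f \<in> L \<Longrightarrow> g \<in> L \<Longrightarrow> (\<lambda>x. max (f x) (g x)) \<in> L"
  using admissible unfolding admissible_space_def by blast

lemma min_in: "f \<in> L \<Longrightarrow> g \<in> L \<Longrightarrow> (\<lambda>x. min (f x) (g x)) \<in> L"
  using admissible unfolding admissible_space_def by blast

lemma diff_in: "f \<in> L \<Longrightarrow> g \<in> L \<Longrightarrow> (\<lambda>x. f x - g x) \<in> L"
  using add_in[OF _ scale_in[of g "-1"]] by simp

lemma continuous: "f \<in> L \<Longrightarrow> continuous_on UNIV f"
  using admissible unfolding admissible_space_def by blast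

lemma open_iff_generated:
  "open S \<longleftrightarrow> openin (topology_generated_by {f -` U | f U. f \<in> L \<and> open U}) S"
  using admissible unfolding admissible_space_def by blast

lemma partial_max_in: "(\<And>k. \<psi> k \<in> L) \<Longrightarrow> partial_max \<psi> m \<in> L"
  by (induction m) (auto intro: max_in)

definition bump_in :: "('a \<Rightarrow> real) \<Rightarrow> 'a set \<Rightarrow> bool" where
  "bump_in \<psi> S \<longleftrightarrow> \<psi> \<in> L \<and> (\<forall>y. 0 \<le> \<psi> y) \<and> (\<forall>y. 0 < \<psi> y \<longrightarrow> y \<in> S)"

lemma exists_bump:
  assumes "open S" "x \<in> S"
  obtains \<psi> where "bump_in \<psi> S" "0 < \<psi> x"
proof -
  have "generate_topology_on {f -` U | f U. f \<in> L \<and> open U} S"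
    using assms(1) open_iff_generated openin_topology_generated_by by blast
  then have "\<forall>x\<in>S. \<exists>\<psi>. bump_in \<psi> S \<and> 0 < \<psi> x"
  proof (induction rule: generate_topology_on.induct)
    case Empty
    then show ?case by simp
  next
    case (Int a b)
    show ?case
    proof
      fix x assume "x \<in> a \<inter> b"
      then obtain p q where "bump_in p a" "0 < p x" "bump_in q b" "0 < q x"
        using Int.IH by blast
      then show "\<exists>\<psi>. bump_in \<psi> (a \<inter> b) \<and> 0 < \<psi> x"
        by (intro exI[of _ "\<lambda>y. min (p y) (q y)"]) (auto simp: bump_in_def intro: min_in)
    qed
  next
    case (UN K)
    then show ?case
      unfolding bump_in_def by (meson UnionE UnionI)
  next
    case (Basis s)
    then obtain f U where s: "s = f -` U" "f \<in> L" "open U" by blast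
    show ?case
    proof
      fix x assume "x \<in> s"
      then obtain e where e: "e > 0" "ball (f x) e \<subseteq> U"
        using s open_contains_ball by blast
      define \<psi> where "\<psi> = (\<lambda>y. max 0 (e - max (f y - f x) (f x - f y)))"
      have "\<psi> \<in> L"
        unfolding \<psi>_def using s(2) by (intro max_in diff_in const_in)
      moreover have "y \<in> s" if "0 < \<psi> y" for y
      proof -
        have "dist (f x) (f y) < e"
          using that unfolding \<psi>_def dist_real_def by auto
        then show ?thesis using e s by auto
      qed
      ultimately show "\<exists>\<psi>. bump_in \<psi> s \<and> 0 < \<psi> x"
        using e(1) by (intro exI[of _ \<psi>]) (auto simp: bump_in_def \<psi>_def)
    qed
  qed
  then show thesis
    using assms(2) that by blast
qed

lemma countable_bumps:
  assumes "second_countable (euclidean :: 'a topology)" "open V"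
  obtains \<psi> :: "nat \<Rightarrow> 'a \<Rightarrow> real"
  where "\<And>k. bump_in (\<psi> k) V" "\<And>y. y \<in> V \<Longrightarrow> \<exists>k. 0 < \<psi> k y"
proof -
  define G where "G = {\<psi>. bump_in \<psi> V}"
  define pos :: "('a \<Rightarrow> real) \<Rightarrow> 'a set" where "pos \<psi> = {y. 0 < \<psi> y}" for \<psi>
  have "Lindelof_space (subtopology euclidean V)"
    using assms(1) second_countable_subtopology second_countable_imp_Lindelof_space by blast
  then have Lindelof: "\<exists>\<V>. countable \<V> \<and> \<V> \<subseteq> \<U> \<and> V \<subseteq> \<Union>\<V>"
    if "\<And>U. U \<in> \<U> \<Longrightarrow> open U" "V \<subseteq> \<Union>\<U>" for \<U>
    using that Lindelof_space_subtopology_subset[of V euclidean] by simp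
  have "open (pos \<psi>)" if "\<psi> \<in> G" for \<psi>
    using that open_Collect_less[OF continuous_on_const continuous]
    unfolding G_def pos_def bump_in_def by blast
  moreover have "V \<subseteq> \<Union>(pos ` G)"
    using exists_bump[OF assms(2)] unfolding G_def pos_def by blast
  ultimately obtain \<V> where "countable \<V>" "\<V> \<subseteq> pos ` G" "V \<subseteq> \<Union>\<V>"
    using Lindelof[of "pos ` G"] by blast
  then obtain G' where G': "countable G'" "G' \<subseteq> G" "V \<subseteq> \<Union>(pos ` G')"
    using countable_subset_image[of \<V> pos G] by blast
  \<comment> \<open>the zero function keeps the enumerated family nonempty when \<open>V = {}\<close>\<close>
  define \<psi> where "\<psi> = from_nat_into (insert (\<lambda>_. 0) G')"
  have range_\<psi>: "range \<psi> = insert (\<lambda>_. 0) G'"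
    unfolding \<psi>_def using G'(1) by simp
  show thesis
  proof
    show "bump_in (\<psi> k) V" for k
    proof -
      have "\<psi> k \<in> insert (\<lambda>_. 0) G'"
        using range_\<psi> by blast
      then show ?thesis
        using G'(2) const_in unfolding G_def bump_in_def by auto
    qed
    show "\<exists>k. 0 < \<psi> k y" if y: "y \<in> V" for y
    proof -
      obtain \<phi> where "\<phi> \<in> G'" "0 < \<phi> y"
        using y G'(3) unfolding pos_def by blast
      moreover obtain k where "\<phi> = \<psi> k"
        using range_\<psi> \<open>\<phi> \<in> G'\<close> by (metis insertI2 rangeE)
      ultimately show ?thesis by blast
    qed
  qed
qed

lemma open_indicator_approx:
  assumes "second_countable (euclidean :: 'a topology)" "open V"
  obtains h :: "nat \<Rightarrow> 'a \<Rightarrow> real"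
  where "\<And>n. h n \<in> L" "\<And>n y. 0 \<le> h n y" "\<And>n y. h n y \<le> indicator V y"
    "\<And>n y. h n y \<le> h (Suc n) y" "\<And>y. (\<lambda>n. h n y) \<longlonglongrightarrow> indicator V y"
proof -
  obtain \<psi> :: "nat \<Rightarrow> 'a \<Rightarrow> real"
    where \<psi>: "\<And>k. bump_in (\<psi> k) V" and cover: "\<And>y. y \<in> V \<Longrightarrow> \<exists>k. 0 < \<psi> k y"
    using countable_bumps[OF assms] by blast
  define h where "h n y = min 1 (real n * partial_max \<psi> n y)" for n y
  have pm_nonneg: "0 \<le> partial_max \<psi> n y" for n y
  proof -
    have "0 \<le> \<psi> 0 y"
      using \<psi>[of 0] unfolding bump_in_def by blast
    then show ?thesis
      using partial_max_upper[of 0 n \<psi> y] by linarith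
  qed
  have outside: "h n y = 0" if "y \<notin> V" for n y
  proof -
    have "\<not> 0 < \<psi> k y" for k
      using \<psi>[of k] that unfolding bump_in_def by blast
    then have "partial_max \<psi> n y \<le> 0"
      by (intro partial_max_least) (simp add: not_less)
    then show ?thesis
      using pm_nonneg[of n y] unfolding h_def by simp
  qed
  show thesis
  proof
    show "h n \<in> L" for n
      unfolding h_def using \<psi> unfolding bump_in_def
      by (intro min_in const_in scale_in partial_max_in) blast
    show "0 \<le> h n y" for n y
      unfolding h_def using pm_nonneg by simp
    show "h n y \<le> indicator V y" for n y
      using outside by (cases "y \<in> V") (auto simp: h_def)
    show "h n y \<le> h (Suc n) y" for n y
      unfolding h_def using pm_nonneg partial_max_mono
      by (intro min.mono mult_mono) auto
    show "(\<lambda>n. h n y) \<longlonglongrightarrow> indicator V y" for y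
    proof (cases "y \<in> V")
      case False
      then show ?thesis using outside by simp
    next
      case True
      then obtain k where k: "0 < \<psi> k y" using cover by blast
      obtain N where N: "inverse (\<psi> k y) < real N" using reals_Archimedean2 by blast
      have "h n y = 1" if "n \<ge> max k N" for n
      proof -
        have "1 < real N * \<psi> k y" using N k by (simp add: field_simps)
        also have "\<dots> \<le> real n * partial_max \<psi> n y"
          using that k partial_max_upper[of k n \<psi> y] by (intro mult_mono) auto
        finally show ?thesis unfolding h_def by simp
      qed
      then have "\<forall>\<^sub>F n in sequentially. h n y = indicator V y"
        using True by (intro eventually_sequentiallyI[of "max k N"]) simp
      then show ?thesis
        by (rule tendsto_eventually)
    qed
  qed
qed

end

locale capacity_lattice = admissible_lattice +
  fixes c :: "('a \<Rightarrow> real) \<Rightarrow> real"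
  assumes capacity: "capacity L c"
begin

lemma subadditive: "f \<in> L \<Longrightarrow> g \<in> L \<Longrightarrow> c (\<lambda>x. f x + g x) \<le> c f + c g"
  using capacity unfolding capacity_def by blast

lemma homogeneous: "f \<in> L \<Longrightarrow> c (\<lambda>x. a * f x) = \<bar>a\<bar> * c f"
  using capacity unfolding capacity_def by blast

lemma mono: "f \<in> L \<Longrightarrow> g \<in> L \<Longrightarrow> (\<And>x. \<bar>f x\<bar> \<le> \<bar>g x\<bar>) \<Longrightarrow> c f \<le> c g"
  using capacity unfolding capacity_def by blast

lemma nonneg: "f \<in> L \<Longrightarrow> 0 \<le> c f"
  using mono[OF scale_in[of f 0]] homogeneous[of f 0] by simp

lemma Dini:
  assumes "\<And>n. F n \<in> L" "\<And>n x. F (Suc n) x \<le> F n x" "\<And>x. (\<lambda>n. F n x) \<longlonglongrightarrow> 0"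
    and "0 < e"
  obtains n where "c (F n) < e"
proof -
  have "(INF n. c (F n)) = 0"
    using capacity assms(1-3) unfolding capacity_def by blast
  moreover have "bdd_below (range (\<lambda>n. c (F n)))"
    using nonneg assms(1) by (intro bdd_belowI[where m = 0]) auto
  ultimately show thesis
    using that assms(4) cINF_less_iff[of UNIV "\<lambda>n. c (F n)" e] by auto
qed

lemma Dini_comparison:
  assumes g: "\<And>n. g n \<in> L" "\<And>n x. 0 \<le> g n x" "\<And>n x. g (Suc n) x \<le> g n x"
      "\<And>x. (\<lambda>n. g n x) \<longlonglongrightarrow> G x"
    and k: "\<And>n. k n \<in> L" "\<And>n x. k n x \<le> k (Suc n) x" "\<And>x. (\<lambda>n. k n x) \<longlonglongrightarrow> K x"
    and "\<And>x. G x \<le> K x" and "0 < e"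
  obtains n where "c (g n) < c (k n) + e"
proof -
  define D where "D n x = max (g n x - k n x) 0" for n x
  have D_in: "D n \<in> L" for n
    unfolding D_def using g(1) k(1) by (intro max_in diff_in const_in)
  moreover have "D (Suc n) x \<le> D n x" for n x
    unfolding D_def using g(3) k(2) by (intro max.mono diff_mono) auto
  moreover have "(\<lambda>n. D n x) \<longlonglongrightarrow> 0" for x
  proof -
    have "(\<lambda>n. D n x) \<longlonglongrightarrow> max (G x - K x) 0"
      unfolding D_def by (intro tendsto_intros g(4) k(3))
    then show ?thesis
      using \<open>G x \<le> K x\<close> by (simp add: max_absorb2)
  qed
  ultimately obtain n where n: "c (D n) < e"
    using Dini \<open>0 < e\<close> by blast
  have "c (g n) \<le> c (\<lambda>x. k n x + D n x)"
    using g(2) by (intro mono g(1) add_in k(1) D_in) (auto simp: D_def)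
  also have "\<dots> \<le> c (k n) + c (D n)"
    by (intro subadditive k(1) D_in)
  finally have "c (g n) < c (k n) + e"
    using n by linarith
  then show thesis by (rule that)
qed

lemma cap_lsc_eq:
  assumes "\<phi> \<in> L" "\<And>x. 0 \<le> \<phi> x"
  shows "cap_lsc L c \<phi> = ereal (c \<phi>)"
proof (rule antisym)
  show "cap_lsc L c \<phi> \<le> ereal (c \<phi>)"
    unfolding cap_lsc_def by (rule SUP_least) (use assms in \<open>auto intro!: mono\<close>)
  show "ereal (c \<phi>) \<le> cap_lsc L c \<phi>"
    using assms by (intro cap_lsc_upper) auto
qed

lemma cap_ext_eq: "\<phi> \<in> L \<Longrightarrow> (\<And>x. 0 \<le> \<phi> x) \<Longrightarrow> cap_ext L c \<phi> = ereal (c \<phi>)"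
  using cap_ext_eq_cap_lsc[OF lsc_continuous[OF continuous]] cap_lsc_eq by simp

lemma cap_lsc_nonneg:
  assumes "\<And>x. 0 \<le> f x"
  shows "0 \<le> cap_lsc L c f"
proof -
  have "ereal (c (\<lambda>_. 0)) \<le> cap_lsc L c f"
    using assms const_in by (intro cap_lsc_upper) auto
  moreover have "0 \<le> c (\<lambda>_. 0)"
    using nonneg const_in .
  ultimately show ?thesis
    by (metis ereal_less_eq(5) order_trans)
qed

lemma cap_lsc_eq_SUP:
  assumes h: "\<And>n. h n \<in> L" "\<And>n x. 0 \<le> h n x" "\<And>n x. h n x \<le> h (Suc n) x"
      "\<And>x. (\<lambda>n. h n x) \<longlonglongrightarrow> f x"
  shows "cap_lsc L c f = (SUP n. ereal (c (h n)))"
proof (rule antisym)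
  show "cap_lsc L c f \<le> (SUP n. ereal (c (h n)))"
    unfolding cap_lsc_def
  proof (rule SUP_least)
    fix \<phi> assume "\<phi> \<in> {\<phi> \<in> L. \<forall>x. 0 \<le> \<phi> x \<and> \<phi> x \<le> f x}"
    then have \<phi>: "\<phi> \<in> L" "\<And>x. 0 \<le> \<phi> x" "\<And>x. \<phi> x \<le> f x" by auto
    show "ereal (c \<phi>) \<le> (SUP n. ereal (c (h n)))"
    proof (rule ereal_le_epsilon2)
      fix e :: real assume "0 < e"
      obtain n where "c \<phi> < c (h n) + e"
        by (rule Dini_comparison[where g = "\<lambda>_. \<phi>" and G = \<phi> and k = h and K = f])
          (use \<phi> h \<open>0 < e\<close> in auto)
      then have "ereal (c \<phi>) \<le> ereal (c (h n)) + ereal e"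
        by simp
      also have "\<dots> \<le> (SUP n. ereal (c (h n))) + ereal e"
        by (intro add_right_mono SUP_upper) auto
      finally show "ereal (c \<phi>) \<le> (SUP n. ereal (c (h n))) + ereal e" .
    qed
  qed
  have "h n x \<le> f x" for n x
    using incseq_le[OF incseq_SucI h(4)] h(3) by blast
  then show "(SUP n. ereal (c (h n))) \<le> cap_lsc L c f"
    using h(1,2) by (intro SUP_least cap_lsc_upper) auto
qed

lemma tendsto_cap_ext_incseq:
  assumes h: "\<And>n. h n \<in> L" "\<And>n x. 0 \<le> h n x" "\<And>n x. h n x \<le> h (Suc n) x"
      "\<And>x. (\<lambda>n. h n x) \<longlonglongrightarrow> f x"
    and "lsc f"
  shows "(\<lambda>n. cap_ext L c (h n)) \<longlonglongrightarrow> cap_ext L c f"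
proof -
  have "0 \<le> f x" for x
    using h(2) by (intro LIMSEQ_le_const[OF h(4)]) auto
  then have "cap_ext L c f = (SUP n. ereal (c (h n)))"
    using cap_ext_eq_cap_lsc[OF \<open>lsc f\<close>] cap_lsc_eq_SUP[OF h] by simp
  moreover have "incseq (\<lambda>n. ereal (c (h n)))"
    by (rule incseq_SucI) (use h in \<open>auto intro!: mono\<close>)
  ultimately show ?thesis
    using LIMSEQ_SUP cap_ext_eq[OF h(1,2)] by simp
qed

lemma INF_le_cap_lsc:
  assumes sc: "second_countable (euclidean :: 'a topology)"
    and g: "\<And>n. g n \<in> L" "\<And>n x. 0 \<le> g n x" "\<And>n x. g (Suc n) x \<le> g n x"
      "\<And>x. (\<lambda>n. g n x) \<longlonglongrightarrow> indicator F x"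
    and f: "lsc f" "\<And>x. indicator F x \<le> f x" "\<And>x. 0 \<le> f x"
    and r: "cap_lsc L c f = ereal r"
  shows "(INF n. c (g n)) \<le> r"
proof (rule field_le_mult_one_interval)
  fix t :: real assume t: "0 < t" "t < 1"
  define W where "W = {x. t < f x}"
  have "open W"
    using f(1) unfolding lsc_def W_def by blast
  then obtain k where k: "\<And>n. k n \<in> L" "\<And>n x. 0 \<le> k n x" "\<And>n x. k n x \<le> indicator W x"
    "\<And>n x. k n x \<le> k (Suc n) x" "\<And>x. (\<lambda>n. k n x) \<longlonglongrightarrow> indicator W x"
    using open_indicator_approx[OF sc] by blast
  have F_W: "indicator F x \<le> (indicator W x :: real)" for x
    using f(2)[of x] t unfolding W_def by (auto simp: indicator_def)
  have scaled_k: "t * c (k n) \<le> r" for n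
  proof -
    have "t * k n x \<le> f x" for x
    proof (cases "x \<in> W")
      case True
      then have "t * k n x \<le> t"
        using k(3)[of n x] t by simp
      then show ?thesis
        using True unfolding W_def by simp
    next
      case False
      then show ?thesis
        using k(2,3)[of n x] f(3)[of x] by simp
    qed
    then have "ereal (c (\<lambda>x. t * k n x)) \<le> cap_lsc L c f"
      using k(1,2) t by (intro cap_lsc_upper scale_in) auto
    then show ?thesis
      using homogeneous[OF k(1)] t r by simp
  qed
  have bdd: "bdd_below (range (\<lambda>n. c (g n)))"
    using nonneg g(1) by (intro bdd_belowI[where m = 0]) auto
  show "t * (INF n. c (g n)) \<le> r"
  proof (rule field_le_epsilon)
    fix e :: real assume "0 < e"
    obtain n where n: "c (g n) < c (k n) + e"
      by (rule Dini_comparison[where g = g and G = "indicator F" and k = k and K = "indicator W"])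
        (use g k F_W \<open>0 < e\<close> in auto)
    have "t * (INF n. c (g n)) \<le> t * c (g n)"
      using bdd t by (intro mult_left_mono cINF_lower) auto
    also have "\<dots> \<le> t * c (k n) + t * e"
      using n t by (simp flip: distrib_left)
    also have "\<dots> \<le> r + e"
      using scaled_k[of n] t \<open>0 < e\<close> by (intro add_mono) auto
    finally show "t * (INF n. c (g n)) \<le> r + e" .
  qed
qed

lemma tendsto_cap_ext_decseq_indicator:
  assumes sc: "second_countable (euclidean :: 'a topology)"
    and g: "\<And>n. g n \<in> L" "\<And>n x. 0 \<le> g n x" "\<And>n x. g (Suc n) x \<le> g n x"
      "\<And>x. (\<lambda>n. g n x) \<longlonglongrightarrow> indicator F x"
  shows "(\<lambda>n. cap_ext L c (g n)) \<longlonglongrightarrow> cap_ext L c (indicator F)"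
proof -
  define i where "i = (INF n. c (g n))"
  have "bdd_below (range (\<lambda>n. c (g n)))"
    using nonneg g(1) by (intro bdd_belowI[where m = 0]) auto
  moreover have "decseq (\<lambda>n. c (g n))"
    by (rule decseq_SucI) (use g in \<open>auto intro!: mono\<close>)
  ultimately have lim: "(\<lambda>n. ereal (c (g n))) \<longlonglongrightarrow> ereal i"
    unfolding i_def using LIMSEQ_decseq_INF by simp
  have "cap_ext L c (indicator F) = ereal i"
  proof (rule antisym)
    have "cap_ext L c (indicator F) \<le> ereal (c (g n))" for n
    proof -
      have "indicator F x \<le> g n x" for x
        using decseq_ge[OF decseq_SucI g(4)] g(3) by blast
      then have "cap_ext L c (indicator F) \<le> cap_ext L c (g n)"
        using g(2) by (intro cap_ext_mono) (simp add: abs_of_nonneg)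
      then show ?thesis
        using cap_ext_eq[OF g(1,2)] by simp
    qed
    then show "cap_ext L c (indicator F) \<le> ereal i"
      using LIMSEQ_le_const[OF lim] by blast
    show "ereal i \<le> cap_ext L c (indicator F)"
      unfolding cap_ext_def
    proof (rule INF_greatest)
      fix f assume "f \<in> {f. lsc f \<and> (\<forall>x. 0 \<le> f x) \<and> (\<forall>x. \<bar>indicator F x :: real\<bar> \<le> f x)}"
      then have f: "lsc f" "\<And>x. indicator F x \<le> f x" "\<And>x. 0 \<le> f x" by auto
      show "ereal i \<le> cap_lsc L c f"
      proof (cases "cap_lsc L c f")
        case (real r)
        then show ?thesis
          using INF_le_cap_lsc[OF sc g f] unfolding i_def by simp
      next
        case MInf
        then show ?thesis
          using cap_lsc_nonneg[OF f(3)] by simp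
      qed simp
    qed
  qed
  then show ?thesis
    using lim cap_ext_eq[OF g(1,2)] by simp
qed

lemma open_indicator_capacity_approx:
  assumes sc: "second_countable (euclidean :: 'a topology)" and "open V"
  obtains h :: "nat \<Rightarrow> 'a \<Rightarrow> real"
  where "\<And>n. h n \<in> L" "\<And>n x. 0 \<le> h n x" "\<And>n x. h n x \<le> h (Suc n) x"
    "\<And>x. (\<lambda>n. h n x) \<longlonglongrightarrow> indicator V x"
    "(\<lambda>n. cap_ext L c (h n)) \<longlonglongrightarrow> cap_ext L c (indicator V)"
proof -
  obtain h :: "nat \<Rightarrow> 'a \<Rightarrow> real" where h: "\<And>n. h n \<in> L" "\<And>n x. 0 \<le> h n x"
    "\<And>n x. h n x \<le> h (Suc n) x" "\<And>x. (\<lambda>n. h n x) \<longlonglongrightarrow> indicator V x"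
    using open_indicator_approx[OF assms] by metis
  show thesis
    by (rule that[OF h tendsto_cap_ext_incseq[OF h lsc_indicator_open[OF \<open>open V\<close>]]])
qed

lemma closed_indicator_capacity_approx:
  assumes sc: "second_countable (euclidean :: 'a topology)" and "closed F"
  obtains g :: "nat \<Rightarrow> 'a \<Rightarrow> real"
  where "\<And>n. g n \<in> L" "\<And>n x. g n x \<le> 1" "\<And>n x. g (Suc n) x \<le> g n x"
    "\<And>x. (\<lambda>n. g n x) \<longlonglongrightarrow> indicator F x"
    "(\<lambda>n. cap_ext L c (g n)) \<longlonglongrightarrow> cap_ext L c (indicator F)"
proof -
  obtain h :: "nat \<Rightarrow> 'a \<Rightarrow> real" where h: "\<And>n. h n \<in> L" "\<And>n x. 0 \<le> h n x"
    "\<And>n x. h n x \<le> indicator (- F) x" "\<And>n x. h n x \<le> h (Suc n) x"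
    "\<And>x. (\<lambda>n. h n x) \<longlonglongrightarrow> indicator (- F) x"
    using open_indicator_approx[OF sc open_Compl[OF \<open>closed F\<close>]] by metis
  define g where "g n x = 1 - h n x" for n x
  have g_in: "g n \<in> L" for n
    unfolding g_def using h(1) by (intro diff_in const_in)
  have g_nonneg: "0 \<le> g n x" for n x
    using order_trans[OF h(3)[of n x] indicator_le_1] unfolding g_def by simp
  have g_dec: "g (Suc n) x \<le> g n x" for n x
    using h(4)[of n x] unfolding g_def by simp
  have g_lim: "(\<lambda>n. g n x) \<longlonglongrightarrow> indicator F x" for x
  proof -
    have "(\<lambda>n. g n x) \<longlonglongrightarrow> 1 - indicator (- F) x"
      unfolding g_def by (intro tendsto_intros h(5))
    then show ?thesis
      by (cases "x \<in> F") auto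
  qed
  show thesis
  proof (rule that[OF g_in _ g_dec g_lim])
    show "g n x \<le> 1" for n x
      using h(2)[of n x] unfolding g_def by simp
    show "(\<lambda>n. cap_ext L c (g n)) \<longlonglongrightarrow> cap_ext L c (indicator F)"
      by (rule tendsto_cap_ext_decseq_indicator[OF sc g_in g_nonneg g_dec g_lim])
  qed
qed

end

theorem proposition2p2:
  fixes L :: "('a::topological_space \<Rightarrow> real) set"
    and c :: "('a \<Rightarrow> real) \<Rightarrow> real"
  assumes "metrizable_space (euclidean :: 'a topology)"
    and "separable_space (euclidean :: 'a topology)"
    and "admissible_space L"
    and "capacity L c"
  shows "(\<forall>V::'a set. open V \<longrightarrow>
            (\<exists>h::nat \<Rightarrow> 'a \<Rightarrow> real.
               (\<forall>n. continuous_on UNIV (h n)) \<and> (\<forall>n x. 0 \<le> h n x) \<and>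
               (\<forall>n x. h n x \<le> h (Suc n) x) \<and>
               (\<forall>x. (\<lambda>n. h n x) \<longlonglongrightarrow> indicator V x) \<and>
               (\<lambda>n. cap_ext L c (h n)) \<longlonglongrightarrow> cap_ext L c (indicator V)))
       \<and> (\<forall>F::'a set. closed F \<longrightarrow>
            (\<exists>g::nat \<Rightarrow> 'a \<Rightarrow> real.
               (\<forall>n. continuous_on UNIV (g n)) \<and> (\<forall>n x. g n x \<le> 1) \<and>
               (\<forall>n x. g (Suc n) x \<le> g n x) \<and>
               (\<forall>x. (\<lambda>n. g n x) \<longlonglongrightarrow> indicator F x) \<and>
               (\<lambda>n. cap_ext L c (g n)) \<longlonglongrightarrow> cap_ext L c (indicator F)))"
proof -
  interpret capacity_lattice L c
    by unfold_locales (use assms(3,4) in auto)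
  have sc: "second_countable (euclidean :: 'a topology)"
    using separable_metrizable_imp_second_countable assms(1,2) .
  show ?thesis
    by (intro conjI allI impI;
        elim open_indicator_capacity_approx[OF sc] closed_indicator_capacity_approx[OF sc];
        intro exI conjI allI; (rule continuous)?; assumption)
qed

end
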